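(* For every positive integer $x$, the entry in row $x$, column $0$ of $T_1$ equals the number of $1$'s in the binary representation of $x$.
   Context: For a positive integer $m$, the triangle $T_m$ is an array whose row $x$ ($x=1,2,\dots$) has $x$ entries, in columns $0,\dots,x-1$. Row $1$ is the single entry $1$. For $x>1$, row $x$ is obtained from row $x-1$ by rotating it cyclically left by $m$ positions (the entry in column $c$ of row $x-1$ moves to column $(c-m)\bmod(x-1)\in\{0,\dots,x-2\}$ of row $x$), then appending in column $x-1$ a new entry equal to $1$ plus the entry in column $0$ of row $x-1$. Here $m=1$. *)

theory Defs
  imports Main
begin

(* Row x of the triangle T_m, as a list of length x (entry in column c is row ! c).
   Indexing: T_row m 0 = row 1. *)
fun T_row0 :: "nat \<Rightarrow> nat \<Rightarrow> nat list" where
  "T_row0 m 0 = [1]"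
| "T_row0 m (Suc k) = rotate m (T_row0 m k) @ [1 + T_row0 m k ! 0]"

definition T_entry :: "nat \<Rightarrow> nat \<Rightarrow> nat \<Rightarrow> nat" where
  "T_entry m x c = T_row0 m (x - 1) ! c"

fun binary_ones :: "nat \<Rightarrow> nat" where
  "binary_ones n = (if n = 0 then 0 else n mod 2 + binary_ones (n div 2))"

declare binary_ones.simps[simp del]

end

theory Submission
  imports Defs
begin

text \<open>Row \<open>x\<close> of \<open>T\<^sub>1\<close> lists the binary digit sums \<open>s\<close> of \<open>x, x + 1, \<dots>, 2x - 1\<close>. Rotating
  by one drops the first of them, and the two numbers \<open>2x\<close> and \<open>2x + 1\<close> needed to complete
  row \<open>x + 1\<close> have digit sums \<open>s(x)\<close> and \<open>s(x) + 1\<close>: the first is the entry moved from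
  column \<open>0\<close> to the end by the rotation, the second is the appended entry.\<close>

lemma binary_ones_0 [simp]: "binary_ones 0 = 0"
  by (simp add: binary_ones.simps)

lemma binary_ones_double [simp]: "binary_ones (2 * n) = binary_ones n"
  by (cases "n = 0") (simp_all add: binary_ones.simps[of "2 * n"])

lemma binary_ones_Suc_double [simp]: "binary_ones (Suc (2 * n)) = Suc (binary_ones n)"
  by (simp add: binary_ones.simps[of "Suc (2 * n)"])

lemma T_row0_1_eq: "T_row0 1 k = map (\<lambda>c. binary_ones (Suc k + c)) [0..<Suc k]"
proof (induction k)
  case 0
  show ?case
    using binary_ones_Suc_double[of 0] by simp
next
  case (Suc k)
  have upt_Cons: "[0..<Suc k] = 0 # map Suc [0..<k]"
    by (simp add: map_Suc_upt upt_conv_Cons del: upt_Suc)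
  have "T_row0 1 (Suc k)
      = rotate1 (map (\<lambda>c. binary_ones (Suc k + c)) [0..<Suc k]) @ [Suc (binary_ones (Suc k))]"
    using Suc.IH by (simp del: upt_Suc)
  also have "\<dots> = map (\<lambda>c. binary_ones (Suc (Suc k) + c)) [0..<k]
      @ [binary_ones (Suc k), Suc (binary_ones (Suc k))]"
    unfolding upt_Cons by (simp del: upt_Suc add: comp_def)
  also have "\<dots> = map (\<lambda>c. binary_ones (Suc (Suc k) + c)) [0..<Suc (Suc k)]"
    using binary_ones_double[of "Suc k"] binary_ones_Suc_double[of "Suc k"]
    by (simp add: mult_2 del: binary_ones_double binary_ones_Suc_double)
  finally show ?case .
qed

theorem mainTheorem14:
  fixes x :: nat
  assumes "x \<ge> 1"
  shows "T_entry 1 x 0 = binary_ones x"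
proof -
  obtain k where "x = Suc k"
    using assms by (cases x) auto
  then show ?thesis
    unfolding T_entry_def T_row0_1_eq by (simp del: upt_Suc)
qed

end
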